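(* Let $Z_1,\dots,Z_n$ be a sample drawn from a stationary $\beta$-mixing distribution with $\beta$-mixing coefficients $\beta(\cdot)$, with $Z_1\in[0,1]$ and $\mathrm{Var}[Z_1]=v<\infty$. Then for any $m,a,s\in\mathbb{N}_+$ with $m>1$, $n=2ma+s$ and $\delta>4(m-1)\beta(a)$, with probability at least $1-\delta$, \[\left|\mathbb{E}[Z_1]-\frac{1}{n}\sum_{i=1}^n Z_i\right|\le\varepsilon,\] where \[\varepsilon=\widetilde{\sigma}(a)\sqrt{\frac{4}{n}\log\left(\frac{4}{\delta-4(m-1)\beta(a)}\right)}+\frac{1}{3m}\log\left(\frac{4}{\delta-4(m-1)\beta(a)}\right)+\frac{s}{n},\qquad \widetilde{\sigma}(a)=\sqrt{v+\frac{2}{a}\sum_{k=1}^{a-1}(a-k)\beta(k)}.\]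
   Context: "$Z_1,\dots,Z_n$ is a sample drawn from a stationary $\beta$-mixing distribution" means $Z_1,\dots,Z_n$ are consecutive terms of a real-valued stationary process $\{Z_t\}_{t\in\mathbb{Z}}$ (finite-dimensional distributions invariant under time shifts) whose $\beta$-mixing coefficients $\beta(a)=\|\mathbb{P}_{-\infty:0,a:\infty}-\mathbb{P}_{-\infty:0}\otimes\mathbb{P}_{a:\infty}\|_{\mathrm{TV}}$ tend to $0$ as $a\to\infty$; here $\mathbb{P}_{-\infty:0,a:\infty}$ is the joint law of the blocks $(Z_{-\infty:0},Z_{a:\infty})$, $\mathbb{P}_{-\infty:0}$ and $\mathbb{P}_{a:\infty}$ are the laws of the individual blocks, and $\|\cdot\|_{\mathrm{TV}}$ is total variation distance. *)

theory Defs
  imports "HOL-Probability.Probability"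
begin

definition tv_dist :: "'b measure \<Rightarrow> 'b measure \<Rightarrow> real" where
  "tv_dist P Q = (SUP A \<in> sets P. \<bar>measure P A - measure Q A\<bar>)"

definition past_block :: "(int \<Rightarrow> 'a \<Rightarrow> real) \<Rightarrow> 'a \<Rightarrow> nat \<Rightarrow> real" where
  "past_block Z \<omega> = (\<lambda>k. Z (- int k) \<omega>)"

definition future_block :: "(int \<Rightarrow> 'a \<Rightarrow> real) \<Rightarrow> nat \<Rightarrow> 'a \<Rightarrow> nat \<Rightarrow> real" where
  "future_block Z a \<omega> = (\<lambda>k. Z (int a + int k) \<omega>)"

abbreviation seq_space :: "(nat \<Rightarrow> real) measure" where
  "seq_space \<equiv> Pi\<^sub>M UNIV (\<lambda>_. borel)"

definition beta_mix :: "'a measure \<Rightarrow> (int \<Rightarrow> 'a \<Rightarrow> real) \<Rightarrow> nat \<Rightarrow> real" where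
  "beta_mix M Z a =
     tv_dist (distr M (seq_space \<Otimes>\<^sub>M seq_space) (\<lambda>\<omega>. (past_block Z \<omega>, future_block Z a \<omega>)))
             (distr M seq_space (past_block Z) \<Otimes>\<^sub>M distr M seq_space (future_block Z a))"

definition stationary_process :: "'a measure \<Rightarrow> (int \<Rightarrow> 'a \<Rightarrow> real) \<Rightarrow> bool" where
  "stationary_process M Z \<longleftrightarrow>
     (\<forall>t. Z t \<in> borel_measurable M) \<and>
     (\<forall>J h. finite J \<longrightarrow>
        distr M (Pi\<^sub>M J (\<lambda>_. borel)) (\<lambda>\<omega>. restrict (\<lambda>t. Z (t + h) \<omega>) J)
      = distr M (Pi\<^sub>M J (\<lambda>_. borel)) (\<lambda>\<omega>. restrict (\<lambda>t. Z t \<omega>) J))"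

definition stationary_beta_mixing :: "'a measure \<Rightarrow> (int \<Rightarrow> 'a \<Rightarrow> real) \<Rightarrow> bool" where
  "stationary_beta_mixing M Z \<longleftrightarrow>
     stationary_process M Z \<and> (beta_mix M Z \<longlonglongrightarrow> 0)"

end

(*
  Cut Z_1, ..., Z_(2ma) into 2m consecutive blocks of length a and group
  them alternately, so that the blocks of one group are separated by gaps of length a.  For the
  m block sums of one group, Chernoff bounds hold as if the blocks were independent, up to an
  additive (m - 1) beta(a): peeling off the last block, the joint law of past and future differs
  from the product of the marginals by at most beta(a) in total variation.  The same total
  variation bound shows that the covariance at lag k is at most beta(k), so each block mean has
  variance at most sigma~(a)^2 / a, and Bernstein's bound on the moment generating function, with
  the usual choice of the exponent, bounds each of the four one-sided deviations (two groups, two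
  signs) by (delta - 4 (m - 1) beta(a)) / 4 + (m - 1) beta(a).  The s leftover terms move the
  sample mean by at most s/n.  Since Z_1 lies in [0,1] only almost surely, the theorem is proved
  for the process clamped to [0,1], which agrees with Z almost surely at all times.
*)
theory Submission
  imports Defs
begin

section \<open>Total variation and product measures\<close>

lemma tv_dist_ge_measure_diff:
  assumes P: "prob_space P" and Q: "prob_space Q" and A: "A \<in> sets P"
  shows "measure P A - measure Q A \<le> tv_dist P Q"
proof -
  have "\<bar>measure P B - measure Q B\<bar> \<le> 1" for B
    using prob_space.prob_le_1[OF P, of B] prob_space.prob_le_1[OF Q, of B]
      measure_nonneg[of P B] measure_nonneg[of Q B] by arith
  then have "\<bar>measure P A - measure Q A\<bar> \<le> tv_dist P Q"
    unfolding tv_dist_def by (intro cSUP_upper[OF A] bdd_aboveI) auto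
  then show ?thesis by simp
qed

lemma tv_dist_nonneg:
  assumes "prob_space P" "prob_space Q"
  shows "0 \<le> tv_dist P Q"
  using tv_dist_ge_measure_diff[OF assms, of "{}"] by simp

lemma card_grid_points_le:
  fixes y :: real and N :: nat
  assumes "N \<ge> 1" "0 \<le> y" "y \<le> 1"
  shows "y - 1 / N \<le> card {l\<in>{1..N}. real l / N \<le> y} / N"
    and "card {l\<in>{1..N}. real l / N \<le> y} / N \<le> y"
proof -
  define K where "K = nat \<lfloor>N * y\<rfloor>"
  have N: "real N > 0" using assms by simp
  have K: "real K \<le> N * y" "N * y < real K + 1"
    using assms by (simp_all add: K_def)
  have Ny: "N * y \<le> N" using assms by (simp add: mult_left_le)
  have KN: "K \<le> N" unfolding K_def using floor_mono[OF Ny] by (simp add: nat_le_iff)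
  have "{l\<in>{1..N}. real l / N \<le> y} = {1..K}"
  proof (intro set_eqI iffI)
    fix l assume "l \<in> {l\<in>{1..N}. real l / N \<le> y}"
    then have "l \<ge> 1" "real l \<le> N * y" using N by (auto simp: field_simps)
    then show "l \<in> {1..K}" using K by simp
  next
    fix l assume "l \<in> {1..K}"
    then show "l \<in> {l\<in>{1..N}. real l / N \<le> y}" using K KN N
      by (auto simp: field_simps)
  qed
  then have card: "card {l\<in>{1..N}. real l / N \<le> y} = K" by simp
  have "y - 1 / N = (N * y - 1) / N" using N by (simp add: field_simps)
  also have "\<dots> \<le> K / N" using K N by (intro divide_right_mono) auto
  finally show "y - 1 / N \<le> card {l\<in>{1..N}. real l / N \<le> y} / N" unfolding card .
  show "card {l\<in>{1..N}. real l / N \<le> y} / N \<le> y"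
    unfolding card using K N by (simp add: field_simps)
qed

text \<open>Approximate f from below, within 1/N, by a staircase built from the indicators of its
  level sets \<open>{f \<ge> l/N}\<close>; tv_dist controls each level set.\<close>
lemma tv_dist_ge_integral_diff_approx:
  fixes N :: nat
  assumes P: "prob_space P" and Q: "prob_space Q" and sQ: "sets Q = sets P"
    and f: "f \<in> borel_measurable P" and f01: "\<And>x. 0 \<le> f x \<and> f x \<le> 1" and N: "N \<ge> 1"
  shows "(\<integral>x. f x \<partial>P) \<le> (\<integral>x. f x \<partial>Q) + tv_dist P Q + 1 / N"
proof -
  interpret P: prob_space P by (rule P)
  interpret Q: prob_space Q by (rule Q)
  have spQ: "space Q = space P" using sQ by (rule sets_eq_imp_space_eq)
  have intP: "integrable P f" using f f01 by (intro P.integrable_const_bound[of _ 1]) auto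
  have intQ: "integrable Q f"
    using f f01 sQ by (intro Q.integrable_const_bound[of _ 1]) (auto simp: measurable_def spQ)
  define A where "A l = {x\<in>space P. real l / N \<le> f x}" for l :: nat
  have AP[measurable]: "A l \<in> sets P" for l unfolding A_def using f by measurable
  have AQ: "A l \<in> sets Q" for l using AP sQ by simp
  define g where "g x = (\<Sum>l\<in>{1..N}. indicator (A l) x) / real N" for x
  have "g x = card {l\<in>{1..N}. real l / N \<le> f x} / N" if "x \<in> space P" for x
  proof -
    have "(\<Sum>l\<in>{1..N}. indicator (A l) x) = (\<Sum>l\<in>{1..N}. if real l / N \<le> f x then 1 else 0 :: real)"
      by (intro sum.cong) (auto simp: A_def indicator_def that)
    then show ?thesis unfolding g_def by (simp add: sum.If_cases Int_def conj_commute)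
  qed
  then have g: "f x - 1 / N \<le> g x" "g x \<le> f x" if "x \<in> space P" for x
    using card_grid_points_le[OF N, of "f x"] f01[of x] that by auto
  have intgP: "integrable P g" unfolding g_def
    by (intro integrable_divide Bochner_Integration.integrable_sum integrable_real_indicator)
      (simp_all add: less_top[symmetric])
  have intgQ: "integrable Q g" unfolding g_def
    by (intro integrable_divide Bochner_Integration.integrable_sum integrable_real_indicator)
      (simp_all add: AQ less_top[symmetric])
  have "(\<Sum>l\<in>{1..N}. measure P (A l)) \<le> (\<Sum>l\<in>{1..N}. measure Q (A l) + tv_dist P Q)"
    using tv_dist_ge_measure_diff[OF P Q AP] by (intro sum_mono) (simp add: algebra_simps)
  then have "(\<integral>x. g x \<partial>P) \<le> (\<integral>x. g x \<partial>Q) + tv_dist P Q"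
    unfolding g_def using AQ N by (simp add: less_top[symmetric] sum.distrib field_simps)
  moreover have "(\<integral>x. f x \<partial>P) \<le> (\<integral>x. g x + 1 / N \<partial>P)"
    using g(1) intP intgP by (intro integral_mono) (auto simp: diff_le_eq)
  moreover have "(\<integral>x. g x + 1 / N \<partial>P) = (\<integral>x. g x \<partial>P) + 1 / N"
    using intgP by (simp add: P.prob_space)
  moreover have "(\<integral>x. g x \<partial>Q) \<le> (\<integral>x. f x \<partial>Q)"
    using g intQ intgQ spQ by (intro integral_mono) auto
  ultimately show ?thesis by linarith
qed

lemma tv_dist_ge_integral_diff:
  assumes "prob_space P" "prob_space Q" "sets Q = sets P"
    and "f \<in> borel_measurable P" "\<And>x. 0 \<le> f x \<and> f x \<le> 1"
  shows "(\<integral>x. f x \<partial>P) - (\<integral>x. f x \<partial>Q) \<le> tv_dist P Q"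
proof (rule ccontr)
  assume "\<not> ?thesis"
  then obtain N :: nat where "1 / real (Suc N) < (\<integral>x. f x \<partial>P) - (\<integral>x. f x \<partial>Q) - tv_dist P Q"
    using nat_approx_posE[of "(\<integral>x. f x \<partial>P) - (\<integral>x. f x \<partial>Q) - tv_dist P Q"] by auto
  with tv_dist_ge_integral_diff_approx[OF assms, of "Suc N"] show False by simp
qed

lemma pair_prob_sum_ge_le:
  assumes P: "prob_space P" and Q: "prob_space Q"
    and F[measurable]: "F \<in> borel_measurable P" and G[measurable]: "G \<in> borel_measurable Q"
    and intG: "integrable Q (\<lambda>y. exp (G y))"
    and tail: "\<And>x. measure P {u\<in>space P. x \<le> F u} \<le> C * exp (- x) + D"
  shows "measure (P \<Otimes>\<^sub>M Q) {z\<in>space (P \<Otimes>\<^sub>M Q). r \<le> F (fst z) + G (snd z)}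
    \<le> C * exp (- r) * (\<integral>y. exp (G y) \<partial>Q) + D"
proof -
  interpret pair_prob_space P Q
    using P Q by (simp add: pair_prob_space_def pair_sigma_finite_def prob_space_imp_sigma_finite)
  define A where "A = {z\<in>space (P \<Otimes>\<^sub>M Q). r \<le> F (fst z) + G (snd z)}"
  have A[measurable]: "A \<in> sets (P \<Otimes>\<^sub>M Q)" unfolding A_def by measurable
  have intA: "integrable (P \<Otimes>\<^sub>M Q) (\<lambda>z. indicator A z :: real)"
    by (simp add: less_top[symmetric])
  have slice: "(\<integral>x. indicator A (x, y) \<partial>P) \<le> C * exp (- r) * exp (G y) + D"
    if y: "y \<in> space Q" for y
  proof -
    have "(\<integral>x. indicator A (x, y) \<partial>P) = (\<integral>x. indicator {u\<in>space P. r - G y \<le> F u} x \<partial>P)"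
      using y by (intro Bochner_Integration.integral_cong refl) (simp add: A_def indicator_def space_pair_measure)
    also have "\<dots> = measure P {u\<in>space P. r - G y \<le> F u}"
      by (simp add: Int_absorb2)
    also have "\<dots> \<le> C * exp (- (r - G y)) + D" by (rule tail)
    finally show ?thesis by (simp add: exp_diff exp_minus field_simps)
  qed
  have "measure (P \<Otimes>\<^sub>M Q) A = (\<integral>y. (\<integral>x. indicator A (x, y) \<partial>P) \<partial>Q)"
    using integral_snd[of "\<lambda>x y. indicator A (x, y) :: real"] intA by simp
  also have "\<dots> \<le> (\<integral>y. C * exp (- r) * exp (G y) + D \<partial>Q)"
    using slice integrable_snd[of "\<lambda>x y. indicator A (x, y) :: real"] intA intG
    by (intro integral_mono) auto
  also have "\<dots> = C * exp (- r) * (\<integral>y. exp (G y) \<partial>Q) + D"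
    using intG by (simp add: M2.prob_space)
  finally show ?thesis unfolding A_def .
qed

lemma integral_pair_measure_mult:
  fixes g h :: "_ \<Rightarrow> real"
  assumes P: "prob_space P" and Q: "prob_space Q"
    and g[measurable]: "g \<in> borel_measurable P" and h[measurable]: "h \<in> borel_measurable Q"
    and g1: "\<And>x. \<bar>g x\<bar> \<le> 1" and h1: "\<And>y. \<bar>h y\<bar> \<le> 1"
  shows "(\<integral>z. g (fst z) * h (snd z) \<partial>(P \<Otimes>\<^sub>M Q)) = (\<integral>x. g x \<partial>P) * (\<integral>y. h y \<partial>Q)"
proof -
  interpret pair_prob_space P Q
    using P Q by (simp add: pair_prob_space_def pair_sigma_finite_def prob_space_imp_sigma_finite)
  have "integrable (P \<Otimes>\<^sub>M Q) (\<lambda>z. g (fst z) * h (snd z))"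
    using g1 h1 by (intro P.integrable_const_bound[of _ 1]) (auto simp: abs_mult intro!: mult_le_one)
  from integral_fst'[OF this] show ?thesis by simp
qed

section \<open>Stationary processes and the mixing coefficient\<close>

lemma stationary_process_measurable:
  assumes "stationary_process M Z"
  shows "Z t \<in> borel_measurable M"
  using assms unfolding stationary_process_def by auto

lemma measurable_past_block:
  assumes "\<And>t. Z t \<in> borel_measurable M"
  shows "past_block Z \<in> measurable M seq_space"
  unfolding past_block_def by (rule measurable_PiM_single') (use assms in auto)

lemma measurable_future_block:
  assumes "\<And>t. Z t \<in> borel_measurable M"
  shows "future_block Z a \<in> measurable M seq_space"
  unfolding future_block_def by (rule measurable_PiM_single') (use assms in auto)

lemma (in prob_space) beta_mix_nonneg:
  assumes Zm: "\<And>t. Z t \<in> borel_measurable M"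
  shows "0 \<le> beta_mix M Z a"
proof -
  note [measurable] = measurable_past_block[OF Zm] measurable_future_block[OF Zm]
  have "(\<lambda>\<omega>. (past_block Z \<omega>, future_block Z a \<omega>)) \<in> measurable M (seq_space \<Otimes>\<^sub>M seq_space)"
    by measurable
  then show ?thesis unfolding beta_mix_def
    by (intro tv_dist_nonneg prob_space_distr prob_space_pair) auto
qed

lemma beta_mix_cong_AE:
  assumes AE: "AE \<omega> in M. \<forall>t. Z t \<omega> = Y t \<omega>"
    and Zm: "\<And>t. Z t \<in> borel_measurable M" and Ym: "\<And>t. Y t \<in> borel_measurable M"
  shows "beta_mix M Z = beta_mix M Y"
proof
  fix a
  note [measurable] = measurable_past_block[OF Zm] measurable_future_block[OF Zm]
    measurable_past_block[OF Ym] measurable_future_block[OF Ym]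
  have AE_blocks: "AE \<omega> in M. past_block Z \<omega> = past_block Y \<omega> \<and> future_block Z a \<omega> = future_block Y a \<omega>"
    using AE by eventually_elim (auto simp: past_block_def future_block_def)
  have "distr M (seq_space \<Otimes>\<^sub>M seq_space) (\<lambda>\<omega>. (past_block Z \<omega>, future_block Z a \<omega>))
      = distr M (seq_space \<Otimes>\<^sub>M seq_space) (\<lambda>\<omega>. (past_block Y \<omega>, future_block Y a \<omega>))"
    "distr M seq_space (past_block Z) = distr M seq_space (past_block Y)"
    "distr M seq_space (future_block Z a) = distr M seq_space (future_block Y a)"
    using AE_blocks by (auto intro!: distr_cong_AE)
  then show "beta_mix M Z a = beta_mix M Y a" unfolding beta_mix_def by simp
qed

lemma stationary_distr_comp:
  assumes st: "stationary_process M Z" and J: "finite J"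
    and G: "G \<in> measurable (Pi\<^sub>M J (\<lambda>_. borel)) N"
  shows "distr M N (\<lambda>\<omega>. G (\<lambda>t\<in>J. Z (t + h) \<omega>)) = distr M N (\<lambda>\<omega>. G (\<lambda>t\<in>J. Z t \<omega>))"
proof -
  have R: "(\<lambda>\<omega>. \<lambda>t\<in>J. Z (t + h') \<omega>) \<in> measurable M (Pi\<^sub>M J (\<lambda>_. borel))" for h'
    by (rule measurable_restrict) (use stationary_process_measurable[OF st] in auto)
  have R0: "(\<lambda>\<omega>. \<lambda>t\<in>J. Z t \<omega>) \<in> measurable M (Pi\<^sub>M J (\<lambda>_. borel))"
    using R[of 0] by simp
  have "distr M (Pi\<^sub>M J (\<lambda>_. borel)) (\<lambda>\<omega>. \<lambda>t\<in>J. Z (t + h) \<omega>)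
      = distr M (Pi\<^sub>M J (\<lambda>_. borel)) (\<lambda>\<omega>. \<lambda>t\<in>J. Z t \<omega>)"
    using st J unfolding stationary_process_def by blast
  then have "distr (distr M (Pi\<^sub>M J (\<lambda>_. borel)) (\<lambda>\<omega>. \<lambda>t\<in>J. Z (t + h) \<omega>)) N G
      = distr (distr M (Pi\<^sub>M J (\<lambda>_. borel)) (\<lambda>\<omega>. \<lambda>t\<in>J. Z t \<omega>)) N G"
    by simp
  then show ?thesis by (simp only: distr_distr[OF G R] distr_distr[OF G R0] comp_def)
qed

lemma stationary_distr_shift:
  assumes st: "stationary_process M Z" and K: "finite K"
    and \<Phi>: "\<Phi> \<in> borel_measurable (Pi\<^sub>M K (\<lambda>_. borel))"
  shows "distr M borel (\<lambda>\<omega>. \<Phi> (\<lambda>i\<in>K. Z (idx i + h) \<omega>)) = distr M borel (\<lambda>\<omega>. \<Phi> (\<lambda>i\<in>K. Z (idx i) \<omega>))"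
proof -
  define G where "G x = \<Phi> (\<lambda>i\<in>K. x (idx i))" for x :: "int \<Rightarrow> real"
  have G: "G \<in> borel_measurable (Pi\<^sub>M (idx ` K) (\<lambda>_. borel))"
    unfolding G_def
    by (rule measurable_compose[OF _ \<Phi>], rule measurable_restrict)
      (auto intro!: measurable_component_singleton)
  have "(\<lambda>\<omega>. G (\<lambda>t\<in>idx ` K. Z (t + h') \<omega>)) = (\<lambda>\<omega>. \<Phi> (\<lambda>i\<in>K. Z (idx i + h') \<omega>))" for h'
    unfolding G_def by (intro ext arg_cong[where f=\<Phi>]) (auto simp: restrict_def)
  from stationary_distr_comp[OF st _ G, of h] this[of h] this[of 0] K show ?thesis by simp
qed

lemma stationary_integral_shift:
  fixes \<Phi> :: "('i \<Rightarrow> real) \<Rightarrow> real"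
  assumes st: "stationary_process M Z" and K: "finite K"
    and \<Phi>: "\<Phi> \<in> borel_measurable (Pi\<^sub>M K (\<lambda>_. borel))"
  shows "(\<integral>\<omega>. \<Phi> (\<lambda>i\<in>K. Z (idx i + h) \<omega>) \<partial>M) = (\<integral>\<omega>. \<Phi> (\<lambda>i\<in>K. Z (idx i) \<omega>) \<partial>M)"
proof -
  have m: "(\<lambda>\<omega>. \<Phi> (\<lambda>i\<in>K. Z (idx i + h') \<omega>)) \<in> borel_measurable M" for h'
    by (rule measurable_compose[OF _ \<Phi>], rule measurable_restrict)
      (use stationary_process_measurable[OF st] in auto)
  have "(\<integral>\<omega>. \<Phi> (\<lambda>i\<in>K. Z (idx i + h') \<omega>) \<partial>M)
      = (\<integral>x. x \<partial>distr M borel (\<lambda>\<omega>. \<Phi> (\<lambda>i\<in>K. Z (idx i + h') \<omega>)))" for h'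
    using integral_distr[OF m[of h'], of "\<lambda>x. x"] by simp
  from this[of h] this[of 0] show ?thesis
    by (simp add: stationary_distr_shift[OF st K \<Phi>, of idx h])
qed

lemma stationary_distr_eq:
  assumes st: "stationary_process M Z"
  shows "distr M borel (Z t) = distr M borel (Z u)"
proof -
  have "(\<lambda>x. x (0::nat)) \<in> borel_measurable (Pi\<^sub>M {0} (\<lambda>_. borel))"
    by (rule measurable_component_singleton) simp
  from stationary_distr_shift[OF st _ this, of "\<lambda>_. u" "t - u"] show ?thesis by simp
qed

lemma stationary_AE_in:
  assumes st: "stationary_process M Z" and S: "S \<in> sets borel"
    and AE: "AE \<omega> in M. Z u \<omega> \<in> S"
  shows "AE \<omega> in M. Z t \<omega> \<in> S"
proof -
  note Zm = stationary_process_measurable[OF st]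
  have "AE x in distr M borel (Z u). x \<in> S"
    using AE S Zm by (subst AE_distr_iff) auto
  then have "AE x in distr M borel (Z t). x \<in> S"
    by (simp only: stationary_distr_eq[OF st, of t u])
  then show ?thesis using S Zm by (subst (asm) AE_distr_iff) auto
qed

lemma stationary_process_comp:
  assumes st: "stationary_process M Z" and g[measurable]: "g \<in> borel_measurable borel"
  shows "stationary_process M (\<lambda>t \<omega>. g (Z t \<omega>))"
  unfolding stationary_process_def
proof (intro conjI allI impI)
  note Zm[measurable] = stationary_process_measurable[OF st]
  show "(\<lambda>\<omega>. g (Z t \<omega>)) \<in> borel_measurable M" for t by measurable
  fix J :: "int set" and h :: int
  assume J: "finite J"
  define G where "G x = (\<lambda>t\<in>J. g (x t))" for x :: "int \<Rightarrow> real"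
  have G: "G \<in> measurable (Pi\<^sub>M J (\<lambda>_. borel)) (Pi\<^sub>M J (\<lambda>_. borel))"
    unfolding G_def by (rule measurable_restrict) measurable
  have "(\<lambda>\<omega>. G (\<lambda>t\<in>J. Z (t + h') \<omega>)) = (\<lambda>\<omega>. \<lambda>t\<in>J. g (Z (t + h') \<omega>))" for h'
    unfolding G_def by (intro ext) (simp add: restrict_def)
  from stationary_distr_comp[OF st J G, of h] this[of h] this[of 0]
  show "distr M (Pi\<^sub>M J (\<lambda>_. borel)) (\<lambda>\<omega>. \<lambda>t\<in>J. g (Z (t + h) \<omega>))
      = distr M (Pi\<^sub>M J (\<lambda>_. borel)) (\<lambda>\<omega>. \<lambda>t\<in>J. g (Z t \<omega>))"
    by simp
qed

section \<open>Exponential moment estimates\<close>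

lemma exp_mult_le_quadratic:
  fixes x l :: real
  assumes x: "\<bar>x\<bar> \<le> 1" and l: "l \<ge> 0"
  shows "exp (l * x) \<le> 1 + l * x + x\<^sup>2 * (exp l - 1 - l)"
proof -
  have s1: "summable (\<lambda>n. inverse (fact (n + 2)) * (l * x) ^ (n + 2))"
    using summable_ignore_initial_segment[OF summable_exp[of "l * x"], of 2] by simp
  have s2: "summable (\<lambda>n. inverse (fact (n + 2)) * l ^ (n + 2))"
    using summable_ignore_initial_segment[OF summable_exp[of l], of 2] by simp
  have "(\<Sum>n. inverse (fact (n + 2)) * (l * x) ^ (n + 2)) \<le> (\<Sum>n. x\<^sup>2 * (inverse (fact (n + 2)) * l ^ (n + 2)))"
  proof (rule suminf_le)
    fix n
    have "x ^ n \<le> 1"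
      using power_le_one[of "\<bar>x\<bar>" n] x by (metis abs_ge_self order_trans power_abs abs_ge_zero)
    then have "(l ^ (n + 2) * x\<^sup>2) * x ^ n \<le> (l ^ (n + 2) * x\<^sup>2) * 1"
      using l by (intro mult_left_mono) auto
    then have "(l * x) ^ (n + 2) \<le> l ^ (n + 2) * x\<^sup>2"
      by (simp add: power_mult_distrib power_add power2_eq_square mult_ac)
    then show "inverse (fact (n + 2)) * (l * x) ^ (n + 2) \<le> x\<^sup>2 * (inverse (fact (n + 2)) * l ^ (n + 2))"
      by (subst mult.left_commute) (rule mult_left_mono, simp_all add: mult_ac)
  qed (use s1 s2 summable_mult in auto)
  also have "\<dots> = x\<^sup>2 * (exp l - 1 - l)"
    using suminf_mult[OF s2, of "x\<^sup>2"] exp_first_two_terms[of l] by simp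
  finally show ?thesis using exp_first_two_terms[of "l * x"] by simp
qed

lemma (in prob_space) mgf_le_exp_second_moment:
  fixes Y :: "'a \<Rightarrow> real"
  assumes Ym: "Y \<in> borel_measurable M" and Yb: "\<And>\<omega>. \<omega> \<in> space M \<Longrightarrow> \<bar>Y \<omega>\<bar> \<le> 1"
    and Y0: "expectation Y = 0" and l: "l \<ge> 0"
  shows "expectation (\<lambda>\<omega>. exp (l * Y \<omega>)) \<le> exp (expectation (\<lambda>\<omega>. (Y \<omega>)\<^sup>2) * (exp l - 1 - l))"
proof -
  define C where "C = exp l - 1 - l"
  have IY: "integrable M Y" using Ym Yb by (intro integrable_const_bound[of _ 1]) auto
  have IY2: "integrable M (\<lambda>\<omega>. (Y \<omega>)\<^sup>2)"
    using Ym Yb by (intro integrable_const_bound[of _ 1]) (auto simp: abs_square_le_1)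
  have IE: "integrable M (\<lambda>\<omega>. exp (l * Y \<omega>))"
    using Ym Yb l by (intro integrable_const_bound[of _ "exp l"]) (auto simp: abs_le_iff mult_left_le)
  have "expectation (\<lambda>\<omega>. exp (l * Y \<omega>)) \<le> expectation (\<lambda>\<omega>. 1 + l * Y \<omega> + (Y \<omega>)\<^sup>2 * C)"
    using exp_mult_le_quadratic[OF Yb l] IE IY IY2 unfolding C_def
    by (intro integral_mono) auto
  also have "\<dots> = 1 + l * expectation Y + expectation (\<lambda>\<omega>. (Y \<omega>)\<^sup>2) * C"
    using IY IY2 by (simp add: prob_space)
  also have "\<dots> \<le> exp (expectation (\<lambda>\<omega>. (Y \<omega>)\<^sup>2) * C)"
    using Y0 by simp
  finally show ?thesis unfolding C_def .
qed

lemma (in prob_space) prob_ge_le_mgf: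
  fixes X :: "'a \<Rightarrow> real"
  assumes X[measurable]: "X \<in> borel_measurable M" and int: "integrable M (\<lambda>\<omega>. exp (X \<omega>))"
  shows "prob {\<omega>\<in>space M. r \<le> X \<omega>} \<le> exp (- r) * expectation (\<lambda>\<omega>. exp (X \<omega>))"
proof -
  have "prob {\<omega>\<in>space M. r \<le> X \<omega>} = prob {\<omega>\<in>space M. exp r \<le> exp (X \<omega>)}"
    by simp
  also have "\<dots> \<le> expectation (\<lambda>\<omega>. exp (X \<omega>)) / exp r"
    using int by (intro integral_Markov_inequality_measure[where A="space M"]) auto
  finally show ?thesis by (simp add: exp_minus field_simps)
qed

lemma (in prob_space) prob_ge_by_union_bound:
  fixes b :: real
  assumes E: "\<And>i. i \<in> I \<Longrightarrow> prob (E i) \<le> b" and cover: "space M - (\<Union>i\<in>I. E i) \<subseteq> G"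
    and I: "finite I" and E_sets: "E ` I \<subseteq> events" and G: "G \<in> events"
  shows "1 - card I * b \<le> prob G"
proof -
  have "prob (\<Union>i\<in>I. E i) \<le> (\<Sum>i\<in>I. prob (E i))"
    using I E_sets by (rule finite_measure_subadditive_finite)
  also have "\<dots> \<le> card I * b"
    using E by (rule sum_bounded_above)
  finally have "prob (\<Union>i\<in>I. E i) \<le> card I * b" .
  moreover have "prob (space M - (\<Union>i\<in>I. E i)) = 1 - prob (\<Union>i\<in>I. E i)"
    using I E_sets by (intro prob_compl sets.finite_UN) auto
  moreover have "prob (space M - (\<Union>i\<in>I. E i)) \<le> prob G"
    using cover G by (intro finite_measure_mono)
  ultimately show ?thesis by linarith
qed

lemma bernstein_ln_ineq:
  fixes u :: real
  assumes u: "u \<ge> 1"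
  shows "6 * (u - 1) * (2 * u - 1) \<le> (3 * u\<^sup>2 - 1) * ln ((3 * u\<^sup>2 - 1) / 2)"
proof -
  define F where "F x = ln ((3 * x\<^sup>2 - 1) / 2) - 6 * (x - 1) * (2 * x - 1) / (3 * x\<^sup>2 - 1)" for x :: real
  have pos: "3 * x\<^sup>2 - 1 > 0" if "x \<ge> 1" for x :: real
    using one_le_power[OF that, of 2] by linarith
  have "(F has_real_derivative 18 * (x - 1) ^ 3 / (3 * x\<^sup>2 - 1)\<^sup>2) (at x)" if x: "x \<ge> 1" for x
  proof -
    define D where "D = 3 * x\<^sup>2 - 1"
    have D: "D > 0" unfolding D_def using pos[OF x] .
    have "(F has_real_derivative inverse (D / 2) * (3 * (2 * x) / 2)
        - ((6 * (2 * x - 1) + 6 * (x - 1) * 2) * D - 6 * (x - 1) * (2 * x - 1) * (3 * (2 * x))) / D\<^sup>2) (at x)"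
      unfolding F_def[abs_def] D_def using D[unfolded D_def]
      by (auto intro!: derivative_eq_intros simp: power2_eq_square)
    moreover have "inverse (D / 2) * (3 * (2 * x) / 2) = (6 * x * D) / D\<^sup>2"
      using D by (simp add: field_simps power2_eq_square)
    moreover have "6 * x * D - ((6 * (2 * x - 1) + 6 * (x - 1) * 2) * D
        - 6 * (x - 1) * (2 * x - 1) * (3 * (2 * x))) = 18 * (x - 1) ^ 3"
      unfolding D_def by (simp add: algebra_simps power2_eq_square power3_eq_cube)
    ultimately have "(F has_real_derivative 18 * (x - 1) ^ 3 / D\<^sup>2) (at x)"
      by (simp add: diff_divide_distrib[symmetric])
    then show ?thesis unfolding D_def .
  qed
  then have "F 1 \<le> F u"
    by (intro DERIV_nonneg_imp_nondecreasing[OF u]) (auto intro!: exI divide_nonneg_nonneg)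
  then show ?thesis using pos[OF u] by (simp add: F_def field_simps)
qed

text \<open>The witness is \<open>\<theta> = ln (1 + s + y/3)\<close> with \<open>y = l/V\<close> and \<open>s = sqrt (2y)\<close>;
  substituting \<open>u = 1 + s/3\<close> turns the claim into bernstein_ln_ineq.\<close>
lemma bernstein_exponent_exists:
  fixes V l t :: real
  assumes V: "V \<ge> 0" and l: "l > 0" and t: "t \<ge> sqrt (2 * V * l) + l / 3"
  shows "\<exists>\<theta>\<ge>0. \<theta> * t - V * (exp \<theta> - 1 - \<theta>) \<ge> l"
proof (cases "V = 0")
  case True
  then show ?thesis using t by (intro exI[of _ 3]) auto
next
  case False
  then have Vp: "V > 0" using V by simp
  define y where "y = l / V"
  have yp: "y > 0" unfolding y_def using Vp l by simp
  define s where "s = sqrt (2 * y)"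
  have s0: "s \<ge> 0" and s2: "s\<^sup>2 = 2 * y" unfolding s_def using yp by simp_all
  define u where "u = 1 + s / 3"
  have u1: "u \<ge> 1" unfolding u_def using s0 by simp
  define x where "x = s + y / 3"
  have x0: "x \<ge> 0" unfolding x_def using s0 yp by simp
  have ux: "1 + x = (3 * u\<^sup>2 - 1) / 2" and uy: "y = 9 / 2 * (u - 1)\<^sup>2"
    unfolding u_def x_def using s2 by (simp_all add: power2_eq_square field_simps)
  define \<theta> where "\<theta> = ln (1 + x)"
  have \<theta>0: "\<theta> \<ge> 0" unfolding \<theta>_def using x0 by simp
  have exp\<theta>: "exp \<theta> = 1 + x" unfolding \<theta>_def using x0 by simp
  have "V * s = sqrt (V\<^sup>2 * (2 * y))" unfolding s_def using Vp by (simp add: real_sqrt_mult)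
  also have "V\<^sup>2 * (2 * y) = 2 * V * l" unfolding y_def using Vp by (simp add: power2_eq_square field_simps)
  finally have "t \<ge> V * x" unfolding x_def using t Vp unfolding y_def by (simp add: algebra_simps)
  have "(1 + x) * \<theta> - x = (3 * u\<^sup>2 - 1) / 2 * ln ((3 * u\<^sup>2 - 1) / 2) - ((3 * u\<^sup>2 - 1) / 2 - 1)"
    unfolding \<theta>_def ux by (simp add: ux[symmetric])
  then have "y \<le> (1 + x) * \<theta> - x"
    using bernstein_ln_ineq[OF u1] unfolding uy by (simp add: power2_eq_square field_simps)
  then have "l \<le> V * ((1 + x) * \<theta> - x)" unfolding y_def using Vp by (simp add: field_simps)
  also have "\<dots> = \<theta> * (V * x) - V * (exp \<theta> - 1 - \<theta>)" unfolding exp\<theta> by (simp add: algebra_simps)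
  also have "\<dots> \<le> \<theta> * t - V * (exp \<theta> - 1 - \<theta>)" using \<open>t \<ge> V * x\<close> \<theta>0 by (simp add: mult_left_mono)
  finally show ?thesis using \<theta>0 by blast
qed

lemma bernstein_rate_le:
  fixes V \<sigma> L :: real and m a n :: nat
  assumes V: "V \<le> \<sigma>\<^sup>2 / a" and \<sigma>: "\<sigma> \<ge> 0" and L: "L > 0"
    and m: "m > 0" and a: "a > 0" and n: "n \<ge> 2 * m * a"
  shows "sqrt (2 * V * (L / m)) + L / m / 3 \<le> (\<sigma> * sqrt (4 / n * L) + L / (3 * m)) * (n / (2 * m * a))"
proof -
  have n': "real n \<ge> 2 * real m * real a" using of_nat_mono[OF n] by simp
  define q where "q = real n / (2 * m * a)"
  have q: "q \<ge> 1" unfolding q_def using n' m a by simp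
  have "2 * V * (L / m) \<le> 2 * (\<sigma>\<^sup>2 / a) * (L / m)"
    using V L m by (intro mult_right_mono mult_left_mono) auto
  also have "\<dots> = \<sigma>\<^sup>2 * (2 * L / (real a * m))" using a m by (simp add: field_simps)
  also have "\<dots> \<le> \<sigma>\<^sup>2 * (4 / n * L * q\<^sup>2)"
  proof (intro mult_left_mono)
    have "4 / n * L * q\<^sup>2 = L * n / (real m * a)\<^sup>2"
      unfolding q_def using n' m a by (simp add: field_simps power2_eq_square)
    moreover have "2 * L / (real a * m) \<le> L * n / (real m * a)\<^sup>2"
      using n' L m a by (simp add: field_simps power2_eq_square)
    ultimately show "2 * L / (real a * m) \<le> 4 / n * L * q\<^sup>2" by simp
  qed simp
  also have "\<dots> = (\<sigma> * sqrt (4 / n * L) * q)\<^sup>2"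
    using L by (simp add: power_mult_distrib)
  finally have "sqrt (2 * V * (L / m)) \<le> sqrt ((\<sigma> * sqrt (4 / n * L) * q)\<^sup>2)"
    by (rule real_sqrt_le_mono)
  then have first: "sqrt (2 * V * (L / m)) \<le> \<sigma> * sqrt (4 / n * L) * q"
    using \<sigma> q L by (simp add: abs_mult)
  have second: "L / m / 3 \<le> L / (3 * m) * q"
    using q L m by (simp add: field_simps mult_left_le)
  show ?thesis
    using first second unfolding q_def[symmetric] distrib_right by linarith
qed

lemma double_sum_lag_le:
  fixes \<gamma> \<beta> :: "nat \<Rightarrow> real"
  assumes \<gamma>0: "\<gamma> 0 = v" and \<gamma>\<beta>: "\<And>d. d \<ge> 1 \<Longrightarrow> \<gamma> d \<le> \<beta> d"
  shows "(\<Sum>i<a. \<Sum>j<a. \<gamma> (if i \<le> j then j - i else i - j))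
    \<le> a * v + 2 * (\<Sum>k<a. real (a - Suc k) * \<beta> (Suc k))"
proof (induction a)
  case 0
  then show ?case by simp
next
  case (Suc a)
  define g where "g i j = \<gamma> (if i \<le> j then j - i else i - j)" for i j :: nat
  have split: "(\<Sum>i<Suc a. \<Sum>j<Suc a. g i j) = (\<Sum>i<a. \<Sum>j<a. g i j) + 2 * (\<Sum>i<a. g i a) + v"
  proof -
    have "(\<Sum>j<a. g a j) = (\<Sum>i<a. g i a)" unfolding g_def by (intro sum.cong) auto
    moreover have "g a a = v" unfolding g_def using \<gamma>0 by simp
    ultimately show ?thesis by (simp add: sum.distrib)
  qed
  have "(\<Sum>i<a. g i a) \<le> (\<Sum>i<a. \<beta> (a - i))"
    unfolding g_def using \<gamma>\<beta> by (intro sum_mono) auto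
  also have "\<dots> = (\<Sum>k<a. \<beta> (Suc k))"
    by (subst sum.nat_diff_reindex[symmetric]) (auto intro!: sum.cong simp: Suc_diff_Suc)
  finally have last_column: "(\<Sum>i<a. g i a) \<le> (\<Sum>k<a. \<beta> (Suc k))" .
  have "(\<Sum>k<Suc a. real (Suc a - Suc k) * \<beta> (Suc k)) = (\<Sum>k<a. real (a - k) * \<beta> (Suc k))"
    by simp
  also have "\<dots> = (\<Sum>k<a. real (a - Suc k) * \<beta> (Suc k) + \<beta> (Suc k))"
    by (intro sum.cong) (auto simp: algebra_simps)
  finally have "(\<Sum>k<Suc a. real (Suc a - Suc k) * \<beta> (Suc k))
      = (\<Sum>k<a. real (a - Suc k) * \<beta> (Suc k)) + (\<Sum>k<a. \<beta> (Suc k))"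
    by (simp add: sum.distrib)
  then show ?case
    using Suc.IH split last_column unfolding g_def by (simp add: algebra_simps)
qed

lemma sum_lags_shift:
  "(\<Sum>k = 1..a - 1. real (a - k) * \<beta> k) = (\<Sum>k<a. real (a - Suc k) * \<beta> (Suc k))"
  by (cases a) (simp_all add: sum.atLeast1_atMost_eq)

section \<open>Blocks\<close>

definition block_sum :: "(int \<Rightarrow> 'a \<Rightarrow> real) \<Rightarrow> nat \<Rightarrow> int \<Rightarrow> nat \<Rightarrow> 'a \<Rightarrow> real" where
  "block_sum Z a p j \<omega> = (\<Sum>i<a. Z (p + int (2 * j * a + i)) \<omega>)"

lemma sum_lessThan_add:
  fixes f :: "nat \<Rightarrow> 'b :: comm_monoid_add"
  shows "(\<Sum>i<x + y. f i) = (\<Sum>i<x. f i) + (\<Sum>i<y. f (x + i))"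
  by (induction y) (auto simp: add_ac)

lemma sum_eq_block_sums:
  "(\<Sum>i<2 * m * a. Z (p + int i) \<omega>) = (\<Sum>j<m. block_sum Z a p j \<omega> + block_sum Z a (p + int a) j \<omega>)"
proof (induction m)
  case 0
  then show ?case by simp
next
  case (Suc m)
  have "(\<Sum>i<2 * Suc m * a. Z (p + int i) \<omega>)
      = (\<Sum>i<2 * m * a. Z (p + int i) \<omega>) + (\<Sum>i<a + a. Z (p + int (2 * m * a + i)) \<omega>)"
    using sum_lessThan_add[of "\<lambda>i. Z (p + int i) \<omega>" "2 * m * a" "a + a"] by (simp add: algebra_simps)
  also have "(\<Sum>i<a + a. Z (p + int (2 * m * a + i)) \<omega>) = block_sum Z a p m \<omega> + block_sum Z a (p + int a) m \<omega>"
    unfolding sum_lessThan_add block_sum_def by (simp add: algebra_simps)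
  finally show ?case using Suc.IH by simp
qed

lemma sum_sample_eq_block_sums:
  assumes "n = 2 * m * a + s"
  shows "(\<Sum>i = 1..n. Z (int i) \<omega>) = (\<Sum>j<m. block_sum Z a 1 j \<omega>) + (\<Sum>j<m. block_sum Z a (1 + int a) j \<omega>)
    + (\<Sum>i<s. Z (1 + int (2 * m * a + i)) \<omega>)"
proof -
  have "(\<Sum>i = 1..n. Z (int i) \<omega>) = (\<Sum>i<n. Z (1 + int i) \<omega>)"
    by (simp add: sum.atLeast1_atMost_eq add.commute)
  also have "\<dots> = (\<Sum>i<2 * m * a. Z (1 + int i) \<omega>) + (\<Sum>i<s. Z (1 + int (2 * m * a + i)) \<omega>)"
    unfolding assms by (rule sum_lessThan_add)
  finally show ?thesis unfolding sum_eq_block_sums sum.distrib .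
qed

lemma past_block_sums_eq:
  "(\<Sum>j<k. \<Sum>i<a. past_block Z \<omega> (2 * k * a - a - 1 - 2 * j * a - i))
    = (\<Sum>j<k. block_sum Z a (int a + 1 - int (2 * k * a)) j \<omega>)"
  unfolding block_sum_def past_block_def
proof (intro sum.cong refl)
  fix j i assume j: "j \<in> {..<k}" and i: "i \<in> {..<a}"
  have "2 * (j + 1) * a \<le> 2 * k * a" using j by (intro mult_right_mono) auto
  then have "2 * j * a + i + a + 1 \<le> 2 * k * a" using i by (simp add: algebra_simps)
  then show "Z (- int (2 * k * a - a - 1 - 2 * j * a - i)) \<omega>
      = Z (int a + 1 - int (2 * k * a) + int (2 * j * a + i)) \<omega>"
    by (simp add: algebra_simps)
qed

lemma future_block_sum_eq:
  "(\<Sum>i<a. future_block Z a \<omega> (Suc i)) = block_sum Z a (int a + 1 - int (2 * k * a)) k \<omega>"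
  "(\<Sum>i<a. future_block Z a \<omega> (Suc i)) = block_sum Z a (int a + 1) 0 \<omega>"
  unfolding block_sum_def future_block_def by (simp_all add: algebra_simps)

section \<open>Stationary processes with values in [0,1]\<close>

locale unit_stationary_process = prob_space M
  for M :: "'a measure" and Z :: "int \<Rightarrow> 'a \<Rightarrow> real" +
  assumes stationary: "stationary_process M Z"
    and nonneg: "0 \<le> Z t \<omega>" and le_one: "Z t \<omega> \<le> 1"
begin

lemma measurable_Z[measurable]: "Z t \<in> borel_measurable M"
  using stationary by (rule stationary_process_measurable)

lemmas measurable_blocks[measurable] =
  measurable_past_block[OF measurable_Z] measurable_future_block[OF measurable_Z]

lemma integrable_Z: "integrable M (Z t)"
  using nonneg le_one by (intro integrable_const_bound[of _ 1]) auto

lemma expectation_Z: "expectation (Z t) = expectation (Z 1)"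
proof -
  have "(\<lambda>x. x (0::nat)) \<in> borel_measurable (Pi\<^sub>M {0} (\<lambda>_. borel))"
    by (rule measurable_component_singleton) simp
  from stationary_integral_shift[OF stationary _ this, of "\<lambda>_. 1" "t - 1"] show ?thesis by simp
qed

lemma expectation_Z_nonneg: "0 \<le> expectation (Z 1)"
  using nonneg by (intro integral_nonneg_AE) auto

lemma expectation_Z_le_one: "expectation (Z 1) \<le> 1"
  using le_one integrable_Z by (intro integral_le_const) auto

lemma measurable_block_sum[measurable]: "block_sum Z a p j \<in> borel_measurable M"
  unfolding block_sum_def[abs_def] by measurable

lemma block_sum_nonneg: "0 \<le> block_sum Z a p j \<omega>"
  unfolding block_sum_def using nonneg by (intro sum_nonneg) auto

lemma block_sum_le: "block_sum Z a p j \<omega> \<le> a"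
proof -
  have "block_sum Z a p j \<omega> \<le> (\<Sum>i<a. 1)"
    unfolding block_sum_def using le_one by (intro sum_mono) auto
  then show ?thesis by simp
qed

lemma integrable_exp_block_sum: "integrable M (\<lambda>\<omega>. exp (c * block_sum Z a p j \<omega>))"
proof (rule integrable_const_bound[where B="exp (\<bar>c\<bar> * a)"])
  have "c * block_sum Z a p j \<omega> \<le> \<bar>c\<bar> * a" for \<omega>
  proof -
    have "c * block_sum Z a p j \<omega> \<le> \<bar>c\<bar> * block_sum Z a p j \<omega>"
      using block_sum_nonneg by (intro mult_right_mono) auto
    also have "\<dots> \<le> \<bar>c\<bar> * a" using block_sum_le by (intro mult_left_mono) auto
    finally show ?thesis .
  qed
  then show "AE \<omega> in M. norm (exp (c * block_sum Z a p j \<omega>)) \<le> exp (\<bar>c\<bar> * a)" by simp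
qed simp

lemma expectation_block_sum: "expectation (block_sum Z a p j) = a * expectation (Z 1)"
proof -
  have "expectation (block_sum Z a p j) = (\<Sum>i<a. expectation (Z (p + int (2 * j * a + i))))"
    unfolding block_sum_def[abs_def] using integrable_Z by simp
  also have "\<dots> = (\<Sum>i<a. expectation (Z 1))" by (intro sum.cong refl expectation_Z)
  finally show ?thesis by simp
qed

lemma distr_block_sums_shift:
  "distr M borel (\<lambda>\<omega>. \<Sum>j<k. c * block_sum Z a p j \<omega>) = distr M borel (\<lambda>\<omega>. \<Sum>j<k. c * block_sum Z a q j \<omega>)"
proof -
  define K where "K = {..<k} \<times> {..<a}"
  define idx where "idx z = q + int (2 * fst z * a + snd z)" for z :: "nat \<times> nat"
  define \<Phi> where "\<Phi> x = (\<Sum>z\<in>K. c * x z)" for x :: "nat \<times> nat \<Rightarrow> real"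
  have \<Phi>: "\<Phi> \<in> borel_measurable (Pi\<^sub>M K (\<lambda>_. borel))"
    unfolding \<Phi>_def[abs_def] by measurable
  have "(\<lambda>\<omega>. \<Phi> (\<lambda>z\<in>K. Z (idx z + h) \<omega>)) = (\<lambda>\<omega>. \<Sum>j<k. c * block_sum Z a (q + h) j \<omega>)" for h
    unfolding \<Phi>_def K_def idx_def block_sum_def
    by (auto simp: sum_distrib_left sum.cartesian_product algebra_simps intro!: sum.cong)
  from this[of "p - q"] this[of 0] stationary_distr_shift[OF stationary _ \<Phi>, of idx "p - q"]
  show ?thesis by (simp add: K_def)
qed

lemma prob_block_sums_ge_shift:
  "prob {\<omega>\<in>space M. r \<le> (\<Sum>j<k. c * block_sum Z a p j \<omega>)}
    = prob {\<omega>\<in>space M. r \<le> (\<Sum>j<k. c * block_sum Z a q j \<omega>)}"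
proof -
  have "prob {\<omega>\<in>space M. r \<le> (\<Sum>j<k. c * block_sum Z a p' j \<omega>)}
      = measure (distr M borel (\<lambda>\<omega>. \<Sum>j<k. c * block_sum Z a p' j \<omega>)) {r..}" for p'
    by (subst measure_distr) (auto simp: vimage_def Int_def conj_commute)
  then show ?thesis by (simp add: distr_block_sums_shift[where p=p and q=q])
qed

lemma mgf_block_sum_shift:
  "expectation (\<lambda>\<omega>. exp (c * block_sum Z a p 0 \<omega>)) = expectation (\<lambda>\<omega>. exp (c * block_sum Z a q 0 \<omega>))"
proof -
  have mgf: "expectation (\<lambda>\<omega>. exp (c * block_sum Z a p' 0 \<omega>))
      = (\<integral>x. exp x \<partial>distr M borel (\<lambda>\<omega>. \<Sum>j<1. c * block_sum Z a p' j \<omega>))" for p'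
    by (subst integral_distr) auto
  show ?thesis
    unfolding mgf[of p] mgf[of q] distr_block_sums_shift[where p=p and q=q and k=1] ..
qed

lemma prob_past_future_le:
  assumes A: "A \<in> sets (seq_space \<Otimes>\<^sub>M seq_space)"
  shows "prob {\<omega>\<in>space M. (past_block Z \<omega>, future_block Z d \<omega>) \<in> A}
    \<le> measure (distr M seq_space (past_block Z) \<Otimes>\<^sub>M distr M seq_space (future_block Z d)) A
      + beta_mix M Z d"
proof -
  have pair[measurable]: "(\<lambda>\<omega>. (past_block Z \<omega>, future_block Z d \<omega>)) \<in> measurable M (seq_space \<Otimes>\<^sub>M seq_space)"
    by measurable
  let ?J = "distr M (seq_space \<Otimes>\<^sub>M seq_space) (\<lambda>\<omega>. (past_block Z \<omega>, future_block Z d \<omega>))"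
  let ?Q = "distr M seq_space (past_block Z) \<Otimes>\<^sub>M distr M seq_space (future_block Z d)"
  have "measure ?J A - measure ?Q A \<le> tv_dist ?J ?Q"
    using A by (intro tv_dist_ge_measure_diff prob_space_distr prob_space_pair) auto
  moreover have "measure ?J A = prob {\<omega>\<in>space M. (past_block Z \<omega>, future_block Z d \<omega>) \<in> A}"
    using A by (subst measure_distr) (auto simp: vimage_def Int_def conj_commute)
  ultimately show ?thesis unfolding beta_mix_def by simp
qed

lemma prob_past_future_sum_ge_le:
  assumes F[measurable]: "F \<in> borel_measurable seq_space" and G[measurable]: "G \<in> borel_measurable seq_space"
    and tail: "\<And>x. prob {\<omega>\<in>space M. x \<le> F (past_block Z \<omega>)} \<le> C * exp (- x) + D"
    and int_G: "integrable M (\<lambda>\<omega>. exp (G (future_block Z d \<omega>)))"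
  shows "prob {\<omega>\<in>space M. r \<le> F (past_block Z \<omega>) + G (future_block Z d \<omega>)}
    \<le> C * exp (- r) * expectation (\<lambda>\<omega>. exp (G (future_block Z d \<omega>))) + D + beta_mix M Z d"
proof -
  let ?Pp = "distr M seq_space (past_block Z)" and ?Pf = "distr M seq_space (future_block Z d)"
  have Pp: "prob_space ?Pp" and Pf: "prob_space ?Pf" by (auto intro!: prob_space_distr)
  define A where "A = {z\<in>space (seq_space \<Otimes>\<^sub>M seq_space). r \<le> F (fst z) + G (snd z)}"
  have A: "A \<in> sets (seq_space \<Otimes>\<^sub>M seq_space)" unfolding A_def by measurable
  have "prob {\<omega>\<in>space M. r \<le> F (past_block Z \<omega>) + G (future_block Z d \<omega>)}
      = prob {\<omega>\<in>space M. (past_block Z \<omega>, future_block Z d \<omega>) \<in> A}"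
    using measurable_space[OF measurable_blocks(1)] measurable_space[OF measurable_blocks(2)]
    by (intro arg_cong[where f=prob]) (auto simp: A_def space_pair_measure)
  also have "\<dots> \<le> measure (?Pp \<Otimes>\<^sub>M ?Pf) A + beta_mix M Z d"
    using A by (rule prob_past_future_le)
  also have "measure (?Pp \<Otimes>\<^sub>M ?Pf) A \<le> C * exp (- r) * (\<integral>y. exp (G y) \<partial>?Pf) + D"
  proof -
    have tail_Pp: "measure ?Pp {u\<in>space ?Pp. x \<le> F u} \<le> C * exp (- x) + D" for x
    proof -
      have "measure ?Pp {u\<in>space ?Pp. x \<le> F u} = prob {\<omega>\<in>space M. x \<le> F (past_block Z \<omega>)}"
        using measurable_space[OF measurable_blocks(1)]
        by (subst measure_distr) (auto intro!: arg_cong[where f=prob])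
      then show ?thesis using tail[of x] by simp
    qed
    have int_Pf: "integrable ?Pf (\<lambda>y. exp (G y))"
      using int_G by (subst integrable_distr_eq) auto
    have "A = {z\<in>space (?Pp \<Otimes>\<^sub>M ?Pf). r \<le> F (fst z) + G (snd z)}"
      by (simp add: A_def space_pair_measure)
    then show ?thesis
      using pair_prob_sum_ge_le[OF Pp Pf _ _ int_Pf tail_Pp] by simp
  qed
  also have "(\<integral>y. exp (G y) \<partial>?Pf) = expectation (\<lambda>\<omega>. exp (G (future_block Z d \<omega>)))"
    by (simp add: integral_distr)
  finally show ?thesis by simp
qed

text \<open>Shift the blocks to start at \<open>q = a + 1 - 2ka\<close>: then the first k blocks lie in the
  past block (indices \<open>\<le> 0\<close>) and the last one starts at \<open>a + 1\<close>, in the future block.\<close>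
lemma block_sums_tail_step:
  assumes IH: "\<And>p r. prob {\<omega>\<in>space M. r \<le> (\<Sum>j<k. c * block_sum Z a p j \<omega>)}
      \<le> exp (- r) * \<psi> ^ k + (real k - 1) * beta_mix M Z a"
    and \<psi>: "\<psi> = expectation (\<lambda>\<omega>. exp (c * block_sum Z a 0 0 \<omega>))"
  shows "prob {\<omega>\<in>space M. r \<le> (\<Sum>j<Suc k. c * block_sum Z a p j \<omega>)}
    \<le> exp (- r) * \<psi> ^ Suc k + real k * beta_mix M Z a"
proof -
  define q :: int where "q = int a + 1 - int (2 * k * a)"
  define pastF where "pastF x = c * (\<Sum>j<k. \<Sum>i<a. x (2 * k * a - a - 1 - 2 * j * a - i))"
    for x :: "nat \<Rightarrow> real"
  define futF where "futF y = c * (\<Sum>i<a. y (Suc i))" for y :: "nat \<Rightarrow> real"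
  have [measurable]: "pastF \<in> borel_measurable seq_space"
    unfolding pastF_def by measurable
  have [measurable]: "futF \<in> borel_measurable seq_space"
    unfolding futF_def by measurable
  have past: "pastF (past_block Z \<omega>) = (\<Sum>j<k. c * block_sum Z a q j \<omega>)" for \<omega>
    unfolding pastF_def q_def past_block_sums_eq by (simp add: sum_distrib_left)
  have fut: "futF (future_block Z a \<omega>) = c * block_sum Z a q k \<omega>" for \<omega>
    unfolding futF_def q_def future_block_sum_eq(1)[where k=k] ..
  have fut0: "futF (future_block Z a \<omega>) = c * block_sum Z a (int a + 1) 0 \<omega>" for \<omega>
    unfolding futF_def future_block_sum_eq(2) ..
  have "prob {\<omega>\<in>space M. r \<le> (\<Sum>j<Suc k. c * block_sum Z a p j \<omega>)}
      = prob {\<omega>\<in>space M. r \<le> (\<Sum>j<Suc k. c * block_sum Z a q j \<omega>)}"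
    by (rule prob_block_sums_ge_shift)
  also have "\<dots> = prob {\<omega>\<in>space M. r \<le> pastF (past_block Z \<omega>) + futF (future_block Z a \<omega>)}"
    by (simp add: past fut)
  also have "\<dots> \<le> \<psi> ^ k * exp (- r) * expectation (\<lambda>\<omega>. exp (futF (future_block Z a \<omega>)))
      + (real k - 1) * beta_mix M Z a + beta_mix M Z a"
  proof (rule prob_past_future_sum_ge_le)
    show "prob {\<omega>\<in>space M. x \<le> pastF (past_block Z \<omega>)} \<le> \<psi> ^ k * exp (- x) + (real k - 1) * beta_mix M Z a"
      for x using IH[of x q] by (simp add: past mult.commute)
    show "integrable M (\<lambda>\<omega>. exp (futF (future_block Z a \<omega>)))"
      by (simp add: fut0 integrable_exp_block_sum)
  qed simp_all
  also have "expectation (\<lambda>\<omega>. exp (futF (future_block Z a \<omega>))) = \<psi>"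
    by (simp add: fut0 \<psi> mgf_block_sum_shift[of c a "int a + 1" 0])
  finally show ?thesis by (simp add: algebra_simps)
qed

lemma block_sums_tail:
  assumes "k \<ge> 1"
  shows "prob {\<omega>\<in>space M. r \<le> (\<Sum>j<k. c * block_sum Z a p j \<omega>)}
    \<le> exp (- r) * expectation (\<lambda>\<omega>. exp (c * block_sum Z a 0 0 \<omega>)) ^ k + (real k - 1) * beta_mix M Z a"
  using assms
proof (induction k arbitrary: p r rule: nat_induct_at_least)
  case base
  have "prob {\<omega>\<in>space M. r \<le> c * block_sum Z a p 0 \<omega>}
      \<le> exp (- r) * expectation (\<lambda>\<omega>. exp (c * block_sum Z a p 0 \<omega>))"
    by (intro prob_ge_le_mgf integrable_exp_block_sum) simp
  then show ?case by (simp add: mgf_block_sum_shift[of c a p 0])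
next
  case (Suc k)
  from block_sums_tail_step[OF Suc.IH refl] show ?case by simp
qed

lemma expectation_past_future_le:
  assumes f[measurable]: "f \<in> borel_measurable (seq_space \<Otimes>\<^sub>M seq_space)"
    and f01: "\<And>z. 0 \<le> f z \<and> f z \<le> 1"
  shows "expectation (\<lambda>\<omega>. f (past_block Z \<omega>, future_block Z d \<omega>))
    \<le> (\<integral>z. f z \<partial>(distr M seq_space (past_block Z) \<Otimes>\<^sub>M distr M seq_space (future_block Z d)))
      + beta_mix M Z d"
proof -
  have pair[measurable]: "(\<lambda>\<omega>. (past_block Z \<omega>, future_block Z d \<omega>)) \<in> measurable M (seq_space \<Otimes>\<^sub>M seq_space)"
    by measurable
  let ?J = "distr M (seq_space \<Otimes>\<^sub>M seq_space) (\<lambda>\<omega>. (past_block Z \<omega>, future_block Z d \<omega>))"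
  let ?Q = "distr M seq_space (past_block Z) \<Otimes>\<^sub>M distr M seq_space (future_block Z d)"
  have "(\<integral>z. f z \<partial>?J) - (\<integral>z. f z \<partial>?Q) \<le> tv_dist ?J ?Q"
    using f01 by (intro tv_dist_ge_integral_diff prob_space_distr prob_space_pair) auto
  moreover have "(\<integral>z. f z \<partial>?J) = expectation (\<lambda>\<omega>. f (past_block Z \<omega>, future_block Z d \<omega>))"
    by (simp add: integral_distr)
  ultimately show ?thesis unfolding beta_mix_def by simp
qed

lemma covariance_shift:
  "expectation (\<lambda>\<omega>. (Z s \<omega> - \<mu>) * (Z (s + int d) \<omega> - \<mu>))
    = expectation (\<lambda>\<omega>. (Z 0 \<omega> - \<mu>) * (Z (int d) \<omega> - \<mu>))"
proof -
  have "(\<lambda>x. (x (0::nat) - \<mu>) * (x 1 - \<mu>)) \<in> borel_measurable (Pi\<^sub>M {0, 1} (\<lambda>_. borel))"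
    by measurable
  from stationary_integral_shift[OF stationary _ this, of "\<lambda>i. if i = 0 then 0 else int d" s]
  show ?thesis by (simp add: add.commute)
qed

lemma covariance_eq_lag:
  "expectation (\<lambda>\<omega>. (Z (int i) \<omega> - \<mu>) * (Z (int j) \<omega> - \<mu>))
    = expectation (\<lambda>\<omega>. (Z 0 \<omega> - \<mu>) * (Z (int (if i \<le> j then j - i else i - j)) \<omega> - \<mu>))"
proof (cases "i \<le> j")
  case True
  then obtain d where "j = i + d" using le_iff_add by blast
  then show ?thesis using covariance_shift[where \<mu>=\<mu> and s="int i" and d=d] by simp
next
  case False
  then obtain d where "i = j + d" using le_iff_add[of j i] by auto
  then show ?thesis using covariance_shift[where \<mu>=\<mu> and s="int j" and d=d] False
    by (simp add: mult.commute)
qed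

text \<open>The product of the two clamped coordinates is a [0,1]-valued function of the past
  and the future block.\<close>
lemma covariance_le_beta_mix:
  defines "\<mu> \<equiv> expectation (Z 1)"
  shows "expectation (\<lambda>\<omega>. (Z 0 \<omega> - \<mu>) * (Z (int d) \<omega> - \<mu>)) \<le> beta_mix M Z d"
proof -
  let ?Pp = "distr M seq_space (past_block Z)" and ?Pf = "distr M seq_space (future_block Z d)"
  define clamp where "clamp u = max 0 (min 1 u)" for u :: real
  have clamp_Z: "clamp (Z t \<omega>) = Z t \<omega>" for t \<omega>
    unfolding clamp_def using nonneg[of t \<omega>] le_one[of t \<omega>] by simp
  have [measurable]: "(\<lambda>x. clamp (x i)) \<in> borel_measurable seq_space" for i
    unfolding clamp_def by measurable
  have clamp01: "0 \<le> clamp u \<and> clamp u \<le> 1" for u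
    unfolding clamp_def by auto
  have EZ: "expectation (Z 0) = \<mu>" "expectation (Z (int d)) = \<mu>"
    unfolding \<mu>_def by (rule expectation_Z)+
  have int_ZZ: "integrable M (\<lambda>\<omega>. Z 0 \<omega> * Z (int d) \<omega>)"
    using nonneg le_one by (intro integrable_const_bound[of _ 1]) (auto simp: abs_mult intro!: mult_le_one)
  have "expectation (\<lambda>\<omega>. (Z 0 \<omega> - \<mu>) * (Z (int d) \<omega> - \<mu>))
      = expectation (\<lambda>\<omega>. Z 0 \<omega> * Z (int d) \<omega> - \<mu> * Z (int d) \<omega> - \<mu> * Z 0 \<omega> + \<mu> * \<mu>)"
    by (simp add: algebra_simps)
  also have "\<dots> = expectation (\<lambda>\<omega>. Z 0 \<omega> * Z (int d) \<omega>) - \<mu> * \<mu>"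
    using int_ZZ integrable_Z EZ by (simp add: prob_space)
  also have "expectation (\<lambda>\<omega>. Z 0 \<omega> * Z (int d) \<omega>)
      = expectation (\<lambda>\<omega>. clamp (past_block Z \<omega> 0) * clamp (future_block Z d \<omega> 0))"
    by (simp add: past_block_def future_block_def clamp_Z)
  also have "\<dots> \<le> (\<integral>z. clamp (fst z 0) * clamp (snd z 0) \<partial>(?Pp \<Otimes>\<^sub>M ?Pf)) + beta_mix M Z d"
    using expectation_past_future_le[of "\<lambda>z. clamp (fst z 0) * clamp (snd z 0)" d] clamp01
    by (simp add: mult_le_one)
  also have "(\<integral>z. clamp (fst z 0) * clamp (snd z 0) \<partial>(?Pp \<Otimes>\<^sub>M ?Pf))
      = (\<integral>x. clamp (x 0) \<partial>?Pp) * (\<integral>y. clamp (y 0) \<partial>?Pf)"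
    using clamp01 by (intro integral_pair_measure_mult prob_space_distr) (auto simp: abs_le_iff)
  also have "\<dots> = \<mu> * \<mu>"
    by (simp add: integral_distr past_block_def future_block_def clamp_Z EZ)
  finally show ?thesis by simp
qed

lemma block_mean_variance_le:
  assumes a: "a > 0"
  shows "expectation (\<lambda>\<omega>. (block_sum Z a 0 0 \<omega> / a - expectation (Z 1))\<^sup>2)
    \<le> (variance (Z 1) + 2 / a * (\<Sum>k = 1..a - 1. real (a - k) * beta_mix M Z k)) / a"
proof -
  define \<mu> where "\<mu> = expectation (Z 1)"
  define X where "X i \<omega> = Z (int i) \<omega> - \<mu>" for i \<omega>
  define \<gamma> where "\<gamma> d = expectation (\<lambda>\<omega>. (Z 0 \<omega> - \<mu>) * (Z (int d) \<omega> - \<mu>))" for d :: nat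
  have "\<bar>X i \<omega>\<bar> \<le> 1" for i \<omega>
    using nonneg[of "int i" \<omega>] le_one[of "int i" \<omega>] expectation_Z_nonneg expectation_Z_le_one
    unfolding X_def \<mu>_def by auto
  then have int_XX: "integrable M (\<lambda>\<omega>. X i \<omega> * X j \<omega>)" for i j
    unfolding X_def by (intro integrable_const_bound[of _ 1]) (auto simp: abs_mult intro!: mult_le_one)
  have square: "(block_sum Z a 0 0 \<omega> / a - \<mu>)\<^sup>2 = (\<Sum>i<a. \<Sum>j<a. X i \<omega> * X j \<omega>) / (real a)\<^sup>2" for \<omega>
  proof -
    have "block_sum Z a 0 0 \<omega> / a - \<mu> = (\<Sum>i<a. X i \<omega>) / a"
      using a unfolding block_sum_def X_def by (simp add: sum_subtractf field_simps)
    then show ?thesis by (simp add: power2_eq_square sum_product power_divide)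
  qed
  have cov: "expectation (\<lambda>\<omega>. X i \<omega> * X j \<omega>) = \<gamma> (if i \<le> j then j - i else i - j)" for i j
    unfolding X_def \<gamma>_def by (rule covariance_eq_lag)
  have \<gamma>0: "\<gamma> 0 = variance (Z 1)"
    using covariance_eq_lag[where \<mu>=\<mu> and i=1 and j=1] unfolding \<gamma>_def \<mu>_def by (simp add: power2_eq_square)
  have \<gamma>\<beta>: "\<gamma> d \<le> beta_mix M Z d" for d
    unfolding \<gamma>_def \<mu>_def by (rule covariance_le_beta_mix)
  have "expectation (\<lambda>\<omega>. (block_sum Z a 0 0 \<omega> / a - \<mu>)\<^sup>2)
      = (\<Sum>i<a. \<Sum>j<a. expectation (\<lambda>\<omega>. X i \<omega> * X j \<omega>)) / (real a)\<^sup>2"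
    unfolding square using int_XX by simp
  also have "\<dots> = (\<Sum>i<a. \<Sum>j<a. \<gamma> (if i \<le> j then j - i else i - j)) / (real a)\<^sup>2"
    by (simp add: cov)
  also have "\<dots> \<le> (a * variance (Z 1) + 2 * (\<Sum>k<a. real (a - Suc k) * beta_mix M Z (Suc k))) / (real a)\<^sup>2"
    by (intro divide_right_mono double_sum_lag_le[where \<beta>="beta_mix M Z", OF \<gamma>0 \<gamma>\<beta>]) auto
  also have "\<dots> = (variance (Z 1) + 2 / a * (\<Sum>k = 1..a - 1. real (a - k) * beta_mix M Z k)) / a"
  proof -
    have "(a * v + 2 * S) / (real a)\<^sup>2 = (v + 2 / a * S) / a" for v S :: real
      using a by (simp add: field_simps power2_eq_square)
    then show ?thesis by (simp only: sum_lags_shift)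
  qed
  finally show ?thesis unfolding \<mu>_def .
qed

lemma mgf_block_sum_le:
  assumes a: "a > 0" and \<sigma>: "\<sigma> = 1 \<or> \<sigma> = -1" and \<theta>: "\<theta> \<ge> 0"
  shows "exp (- \<sigma> * \<theta> * expectation (Z 1)) * expectation (\<lambda>\<omega>. exp (\<sigma> * \<theta> / a * block_sum Z a 0 0 \<omega>))
    \<le> exp (expectation (\<lambda>\<omega>. (block_sum Z a 0 0 \<omega> / a - expectation (Z 1))\<^sup>2) * (exp \<theta> - 1 - \<theta>))"
proof -
  define Y where "Y \<omega> = \<sigma> * (block_sum Z a 0 0 \<omega> / a - expectation (Z 1))" for \<omega>
  have block_mean: "0 \<le> block_sum Z a 0 0 \<omega> / a" "block_sum Z a 0 0 \<omega> / a \<le> 1" for \<omega>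
    using block_sum_nonneg[of a 0 0 \<omega>] block_sum_le[of a 0 0 \<omega>] a by (auto simp: field_simps)
  have Y_bound: "\<bar>Y \<omega>\<bar> \<le> 1" for \<omega>
    unfolding Y_def using \<sigma> block_mean[of \<omega>] expectation_Z_nonneg expectation_Z_le_one
    by (auto simp: abs_le_iff)
  have "expectation Y = \<sigma> * (expectation (block_sum Z a 0 0) / a - expectation (Z 1))"
    unfolding Y_def by (simp add: prob_space integrable_Z block_sum_def[abs_def])
  then have Y_mean: "expectation Y = 0"
    using a by (simp add: expectation_block_sum)
  have Y_square: "expectation (\<lambda>\<omega>. (Y \<omega>)\<^sup>2) = expectation (\<lambda>\<omega>. (block_sum Z a 0 0 \<omega> / a - expectation (Z 1))\<^sup>2)"
    unfolding Y_def power_mult_distrib using \<sigma> by auto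
  have Y_meas: "(\<lambda>\<omega>. Y \<omega>) \<in> borel_measurable M" unfolding Y_def by measurable
  have "expectation (\<lambda>\<omega>. exp (\<theta> * Y \<omega>))
      = expectation (\<lambda>\<omega>. exp (- \<sigma> * \<theta> * expectation (Z 1)) * exp (\<sigma> * \<theta> / a * block_sum Z a 0 0 \<omega>))"
    unfolding Y_def using a
    by (intro Bochner_Integration.integral_cong refl) (simp add: exp_add[symmetric] field_simps)
  then have "exp (- \<sigma> * \<theta> * expectation (Z 1)) * expectation (\<lambda>\<omega>. exp (\<sigma> * \<theta> / a * block_sum Z a 0 0 \<omega>))
      = expectation (\<lambda>\<omega>. exp (\<theta> * Y \<omega>))"
    by simp
  also have "\<dots> \<le> exp (expectation (\<lambda>\<omega>. (Y \<omega>)\<^sup>2) * (exp \<theta> - 1 - \<theta>))"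
    by (rule mgf_le_exp_second_moment[OF Y_meas Y_bound Y_mean \<theta>])
  finally show ?thesis unfolding Y_square .
qed

lemma block_deviation_tail:
  assumes a: "a > 0" and m: "m \<ge> 1" and \<sigma>: "\<sigma> = 1 \<or> \<sigma> = -1" and \<theta>: "\<theta> \<ge> 0"
    and \<theta>_good: "\<theta> * t - expectation (\<lambda>\<omega>. (block_sum Z a 0 0 \<omega> / a - expectation (Z 1))\<^sup>2)
      * (exp \<theta> - 1 - \<theta>) \<ge> l"
  shows "prob {\<omega>\<in>space M. m * t \<le> (\<Sum>j<m. \<sigma> * (block_sum Z a p j \<omega> / a - expectation (Z 1)))}
    \<le> exp (- (m * l)) + (real m - 1) * beta_mix M Z a"
proof -
  define \<mu> where "\<mu> = expectation (Z 1)"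
  define V where "V = expectation (\<lambda>\<omega>. (block_sum Z a 0 0 \<omega> / a - \<mu>)\<^sup>2)"
  define c where "c = \<sigma> * \<theta> / a"
  define r where "r = \<theta> * m * t + \<sigma> * \<theta> * m * \<mu>"
  define \<psi> where "\<psi> = expectation (\<lambda>\<omega>. exp (c * block_sum Z a 0 0 \<omega>))"
  have "{\<omega>\<in>space M. m * t \<le> (\<Sum>j<m. \<sigma> * (block_sum Z a p j \<omega> / a - \<mu>))}
      \<subseteq> {\<omega>\<in>space M. r \<le> (\<Sum>j<m. c * block_sum Z a p j \<omega>)}"
  proof safe
    fix \<omega> assume "\<omega> \<in> space M" and dev: "m * t \<le> (\<Sum>j<m. \<sigma> * (block_sum Z a p j \<omega> / a - \<mu>))"
    have "(\<Sum>j<m. c * block_sum Z a p j \<omega>) = \<theta> * (\<Sum>j<m. \<sigma> * (block_sum Z a p j \<omega> / a - \<mu>)) + \<sigma> * \<theta> * m * \<mu>"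
      unfolding c_def by (simp add: sum_distrib_left sum_subtractf algebra_simps sum.distrib)
    moreover have "\<theta> * (m * t) \<le> \<theta> * (\<Sum>j<m. \<sigma> * (block_sum Z a p j \<omega> / a - \<mu>))"
      using dev \<theta> by (rule mult_left_mono)
    ultimately show "r \<le> (\<Sum>j<m. c * block_sum Z a p j \<omega>)" unfolding r_def by (simp add: algebra_simps)
  qed
  then have "prob {\<omega>\<in>space M. m * t \<le> (\<Sum>j<m. \<sigma> * (block_sum Z a p j \<omega> / a - \<mu>))}
      \<le> prob {\<omega>\<in>space M. r \<le> (\<Sum>j<m. c * block_sum Z a p j \<omega>)}"
    by (intro finite_measure_mono) measurable
  also have "\<dots> \<le> exp (- r) * \<psi> ^ m + (real m - 1) * beta_mix M Z a"
    unfolding \<psi>_def using m by (rule block_sums_tail)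
  finally have "prob {\<omega>\<in>space M. m * t \<le> (\<Sum>j<m. \<sigma> * (block_sum Z a p j \<omega> / a - \<mu>))}
      \<le> exp (- r) * \<psi> ^ m + (real m - 1) * beta_mix M Z a" .
  moreover have "exp (- r) * \<psi> ^ m \<le> exp (- (m * l))"
  proof -
    have "exp (- r) * \<psi> ^ m = (exp (- \<theta> * t) * (exp (- \<sigma> * \<theta> * \<mu>) * \<psi>)) ^ m"
      unfolding r_def by (simp add: exp_of_nat_mult[symmetric] exp_add[symmetric] algebra_simps)
    also have "\<dots> \<le> (exp (- \<theta> * t) * exp (V * (exp \<theta> - 1 - \<theta>))) ^ m"
      using mgf_block_sum_le[OF a \<sigma> \<theta>]
      unfolding \<psi>_def c_def V_def \<mu>_def by (intro power_mono mult_left_mono) auto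
    also have "\<dots> \<le> exp (- l) ^ m"
      using \<theta>_good unfolding V_def \<mu>_def by (intro power_mono) (simp_all add: exp_add[symmetric])
    also have "\<dots> = exp (- (m * l))" by (simp add: exp_of_nat_mult[symmetric])
    finally show ?thesis .
  qed
  ultimately show ?thesis unfolding \<mu>_def by simp
qed

lemma block_deviation_prob_le:
  fixes L x :: real and m a n :: nat
  assumes a: "a > 0" and m: "m \<ge> 1" and n: "n \<ge> 2 * m * a" and L: "L > 0"
    and \<sigma>: "\<sigma> = 1 \<or> \<sigma> = -1"
  defines "x \<equiv> sqrt (variance (Z 1) + 2 / a * (\<Sum>k = 1..a - 1. real (a - k) * beta_mix M Z k))
      * sqrt (4 / n * L) + L / (3 * m)"
  shows "prob {\<omega>\<in>space M. x * n / (2 * a) \<le> (\<Sum>j<m. \<sigma> * (block_sum Z a p j \<omega> / a - expectation (Z 1)))}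
    \<le> exp (- L) + (real m - 1) * beta_mix M Z a"
proof -
  define S where "S = variance (Z 1) + 2 / a * (\<Sum>k = 1..a - 1. real (a - k) * beta_mix M Z k)"
  define V where "V = expectation (\<lambda>\<omega>. (block_sum Z a 0 0 \<omega> / a - expectation (Z 1))\<^sup>2)"
  define t where "t = x * (n / (2 * m * a))"
  have V0: "0 \<le> V" unfolding V_def by (intro integral_nonneg_AE) auto
  have V_le: "V \<le> S / a"
    using block_mean_variance_le[OF a] unfolding V_def S_def .
  then have "0 \<le> S / a" using V0 by linarith
  then have "0 \<le> S" using a by (simp add: zero_le_divide_iff)
  then have "sqrt S \<ge> 0" "V \<le> (sqrt S)\<^sup>2 / a" using V_le by simp_all
  from bernstein_rate_le[OF this(2) this(1) _ _ a n, of L] have "t \<ge> sqrt (2 * V * (L / m)) + L / m / 3"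
    unfolding t_def x_def S_def[symmetric] using L m by simp
  moreover have "L / m > 0" using L m by simp
  ultimately obtain \<theta> where \<theta>: "\<theta> \<ge> 0" "\<theta> * t - V * (exp \<theta> - 1 - \<theta>) \<ge> L / m"
    using bernstein_exponent_exists[OF V0] by blast
  have "m * t = x * n / (2 * a)" unfolding t_def using m by simp
  with block_deviation_tail[OF a m \<sigma> \<theta>(1) \<theta>(2)[unfolded V_def]] show ?thesis
    using m by simp
qed

lemma sample_mean_deviation_le:
  fixes n m a s :: nat and x :: real
  assumes n: "n = 2 * m * a + s" "n > 0" and a: "a > 0"
    and dev: "\<And>p. p \<in> {1, 1 + int a} \<Longrightarrow>
      \<bar>\<Sum>j<m. block_sum Z a p j \<omega> / a - expectation (Z 1)\<bar> < x * n / (2 * a)"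
  shows "\<bar>expectation (Z 1) - 1 / n * (\<Sum>i = 1..n. Z (int i) \<omega>)\<bar> \<le> x + s / n"
proof -
  define \<mu> where "\<mu> = expectation (Z 1)"
  define D where "D p = (\<Sum>j<m. block_sum Z a p j \<omega> / a - \<mu>)" for p
  define R where "R = (\<Sum>i<s. Z (1 + int (2 * m * a + i)) \<omega>)"
  have block_sums: "(\<Sum>j<m. block_sum Z a p j \<omega>) = a * D p + a * m * \<mu>" for p
    unfolding D_def using a by (simp add: sum_subtractf sum_divide_distrib[symmetric] field_simps)
  have "real n = 2 * a * m + s" using n(1) by simp
  then have "\<mu> - 1 / n * (\<Sum>i = 1..n. Z (int i) \<omega>) = - (a * (D 1 + D (1 + int a)) + (R - s * \<mu>)) / n"
    unfolding sum_sample_eq_block_sums[OF n(1)] block_sums R_def[symmetric] using n(2)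
    by (simp add: field_simps)
  moreover have "\<bar>a * (D 1 + D (1 + int a))\<bar> \<le> x * n"
  proof -
    have "\<bar>D p\<bar> < x * n / (2 * a)" if "p \<in> {1, 1 + int a}" for p
      using dev[OF that] unfolding D_def \<mu>_def .
    from this[of 1] this[of "1 + int a"] have "\<bar>D 1 + D (1 + int a)\<bar> \<le> x * n / a"
      using abs_triangle_ineq[of "D 1" "D (1 + int a)"] by simp
    then have "a * \<bar>D 1 + D (1 + int a)\<bar> \<le> x * n" using a by (simp add: field_simps)
    then show ?thesis by (simp add: abs_mult)
  qed
  moreover have "\<bar>R - s * \<mu>\<bar> \<le> s"
  proof -
    have "0 \<le> R" "R \<le> s"
      using nonneg le_one sum_mono[of "{..<s}" "\<lambda>i. Z (1 + int (2 * m * a + i)) \<omega>" "\<lambda>_. 1"]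
      unfolding R_def by (auto intro: sum_nonneg)
    moreover have "0 \<le> s * \<mu>" "s * \<mu> \<le> s"
      using expectation_Z_nonneg expectation_Z_le_one unfolding \<mu>_def by (auto simp: mult_left_le)
    ultimately show ?thesis by linarith
  qed
  ultimately have "\<bar>\<mu> - 1 / n * (\<Sum>i = 1..n. Z (int i) \<omega>)\<bar> \<le> (x * n + s) / n"
    using abs_triangle_ineq[of "a * (D 1 + D (1 + int a))" "R - s * \<mu>"]
    by (simp add: divide_right_mono)
  then show ?thesis unfolding \<mu>_def using n(2) by (simp add: add_divide_distrib)
qed

theorem sample_mean_concentration:
  fixes \<delta> :: real and m a s n :: nat
  assumes m: "m > 1" and a: "a > 0" and s: "s > 0" and n: "n = 2 * m * a + s"
    and \<delta>: "\<delta> > 4 * (real m - 1) * beta_mix M Z a"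
  shows "prob {\<omega> \<in> space M.
           \<bar>expectation (Z 1) - (1 / real n) * (\<Sum>i = 1..n. Z (int i) \<omega>)\<bar>
           \<le> (let L = ln (4 / (\<delta> - 4 * (real m - 1) * beta_mix M Z a));
                  \<sigma> = sqrt (variance (Z 1) + (2 / real a) * (\<Sum>k = 1..a - 1. real (a - k) * beta_mix M Z k))
              in \<sigma> * sqrt ((4 / real n) * L) + (1 / (3 * real m)) * L + real s / real n)}
         \<ge> 1 - \<delta>"
proof (cases "\<delta> \<ge> 1")
  case True
  then show ?thesis by (smt (verit) measure_nonneg)
next
  case False
  define \<beta> where "\<beta> = beta_mix M Z a"
  define L where "L = ln (4 / (\<delta> - 4 * (real m - 1) * \<beta>))"
  define x where "x = sqrt (variance (Z 1) + 2 / a * (\<Sum>k = 1..a - 1. real (a - k) * beta_mix M Z k))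
      * sqrt (4 / n * L) + L / (3 * m)"
  define E where "E = (\<lambda>(\<sigma>, p). {\<omega>\<in>space M.
      x * n / (2 * a) \<le> (\<Sum>j<m. \<sigma> * (block_sum Z a p j \<omega> / a - expectation (Z 1)))})"
  define I where "I = {1, -1 :: real} \<times> {1, 1 + int a}"
  have "0 \<le> 4 * (real m - 1) * \<beta>"
    using beta_mix_nonneg[OF measurable_Z] m unfolding \<beta>_def by simp
  then have L: "L > 0" and exp_L: "exp (- L) = (\<delta> - 4 * (real m - 1) * \<beta>) / 4"
    unfolding L_def using \<delta> False by (simp_all add: \<beta>_def exp_minus)
  have E_le: "prob (E i) \<le> exp (- L) + (real m - 1) * \<beta>" if i_in: "i \<in> I" for i
  proof -
    obtain \<sigma> p where i: "i = (\<sigma>, p)" and \<sigma>: "\<sigma> = 1 \<or> \<sigma> = -1"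
      using i_in unfolding I_def by auto
    show ?thesis unfolding i E_def prod.case x_def \<beta>_def
      by (rule block_deviation_prob_le[OF a _ _ L \<sigma>]) (use m n in simp_all)
  qed
  have cover: "space M - (\<Union>i\<in>I. E i)
      \<subseteq> {\<omega> \<in> space M. \<bar>expectation (Z 1) - 1 / n * (\<Sum>i = 1..n. Z (int i) \<omega>)\<bar> \<le> x + s / n}"
  proof safe
    fix \<omega> assume \<omega>: "\<omega> \<in> space M" "\<omega> \<notin> (\<Union>i\<in>I. E i)"
    have neg: "(\<Sum>j<m. \<mu> - block_sum Z a p j \<omega> / a) = - (\<Sum>j<m. block_sum Z a p j \<omega> / a - \<mu>)" for p \<mu>
      by (subst sum_negf[symmetric]) simp
    have dev: "\<bar>\<Sum>j<m. block_sum Z a p j \<omega> / a - expectation (Z 1)\<bar> < x * n / (2 * a)"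
      if "p \<in> {1, 1 + int a}" for p
      using \<omega> that unfolding E_def I_def by (auto simp: neg abs_less_iff)
    have "n > 0" using n s by simp
    from sample_mean_deviation_le[OF n this a dev]
    show "\<bar>expectation (Z 1) - 1 / n * (\<Sum>i = 1..n. Z (int i) \<omega>)\<bar> \<le> x + s / n" .
  qed
  have "1 - card I * (exp (- L) + (real m - 1) * \<beta>)
      \<le> prob {\<omega> \<in> space M. \<bar>expectation (Z 1) - 1 / n * (\<Sum>i = 1..n. Z (int i) \<omega>)\<bar> \<le> x + s / n}"
  proof (rule prob_ge_by_union_bound[OF E_le cover])
    show "finite I" "E ` I \<subseteq> events" unfolding I_def E_def by auto
  qed measurable
  moreover have "card I * (exp (- L) + (real m - 1) * \<beta>) = \<delta>"
    using a unfolding I_def exp_L by (simp add: card_cartesian_product field_simps)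
  ultimately show ?thesis
    unfolding x_def L_def \<beta>_def Let_def by simp
qed

end

lemma clamped_unit_stationary_process:
  assumes "prob_space M" and st: "stationary_process M Z" and AE: "AE \<omega> in M. Z 1 \<omega> \<in> {0..1}"
  shows "unit_stationary_process M (\<lambda>t \<omega>. max 0 (min 1 (Z t \<omega>)))"
    and "AE \<omega> in M. \<forall>t. max 0 (min 1 (Z t \<omega>)) = Z t \<omega>"
proof -
  have "(\<lambda>x::real. max 0 (min 1 x)) \<in> borel_measurable borel" by measurable
  then have "stationary_process M (\<lambda>t \<omega>. max 0 (min 1 (Z t \<omega>)))"
    by (rule stationary_process_comp[OF st])
  with assms(1) show "unit_stationary_process M (\<lambda>t \<omega>. max 0 (min 1 (Z t \<omega>)))"
    by (auto simp: unit_stationary_process_def unit_stationary_process_axioms_def)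
  show "AE \<omega> in M. \<forall>t. max 0 (min 1 (Z t \<omega>)) = Z t \<omega>"
  proof (subst AE_all_countable, intro allI)
    fix t
    have "AE \<omega> in M. Z t \<omega> \<in> {0..1}" using stationary_AE_in[OF st _ AE] by simp
    then show "AE \<omega> in M. max 0 (min 1 (Z t \<omega>)) = Z t \<omega>" by eventually_elim auto
  qed
qed

theorem lemmaB2:
  fixes M :: "'a measure" and Z :: "int \<Rightarrow> 'a \<Rightarrow> real"
    and v \<delta> :: real and m a s n :: nat
  assumes "prob_space M"
    and "stationary_beta_mixing M Z"
    and "AE \<omega> in M. Z 1 \<omega> \<in> {0..1}"
    and "(LINT \<omega>|M. (Z 1 \<omega> - (LINT \<omega>'|M. Z 1 \<omega>'))\<^sup>2) = v"
    and "m > 1" and "a > 0" and "s > 0"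
    and "n = 2 * m * a + s"
    and "\<delta> > 4 * (real m - 1) * beta_mix M Z a"
  shows "measure M {\<omega> \<in> space M.
           \<bar>(LINT \<omega>'|M. Z 1 \<omega>') - (1 / real n) * (\<Sum>i = 1..n. Z (int i) \<omega>)\<bar>
           \<le> (let L = ln (4 / (\<delta> - 4 * (real m - 1) * beta_mix M Z a));
                  \<sigma> = sqrt (v + (2 / real a) * (\<Sum>k = 1..a - 1. real (a - k) * beta_mix M Z k))
              in \<sigma> * sqrt ((4 / real n) * L) + (1 / (3 * real m)) * L + real s / real n)}
         \<ge> 1 - \<delta>"
proof -
  have st: "stationary_process M Z"
    using assms(2) unfolding stationary_beta_mixing_def by blast
  note Zm[measurable] = stationary_process_measurable[OF st]
  define Zc where "Zc = (\<lambda>t \<omega>. max 0 (min 1 (Z t \<omega>)))"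
  interpret Zc: unit_stationary_process M Zc
    unfolding Zc_def by (rule clamped_unit_stationary_process(1)[OF assms(1) st assms(3)])
  have AE_eq: "AE \<omega> in M. \<forall>t. Zc t \<omega> = Z t \<omega>"
    unfolding Zc_def by (rule clamped_unit_stationary_process(2)[OF assms(1) st assms(3)])
  have \<beta>: "beta_mix M Zc = beta_mix M Z"
    by (rule beta_mix_cong_AE[OF AE_eq Zc.measurable_Z Zm])
  have mean: "(LINT \<omega>|M. Zc 1 \<omega>) = (LINT \<omega>|M. Z 1 \<omega>)"
    using AE_eq by (intro integral_cong_AE) (measurable, measurable, auto)
  have var: "(LINT \<omega>|M. (Zc 1 \<omega> - (LINT \<omega>'|M. Zc 1 \<omega>'))\<^sup>2) = v"
    unfolding mean assms(4)[symmetric] using AE_eq by (intro integral_cong_AE) (measurable, measurable, auto)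
  have same_event: "measure M {\<omega> \<in> space M. \<bar>c - 1 / n * (\<Sum>i = 1..n. Zc (int i) \<omega>)\<bar> \<le> e}
      = measure M {\<omega> \<in> space M. \<bar>c - 1 / n * (\<Sum>i = 1..n. Z (int i) \<omega>)\<bar> \<le> e}" for c e
    using AE_eq by (intro measure_eq_AE) auto
  show ?thesis
    using Zc.sample_mean_concentration[OF assms(5-8), unfolded var, unfolded \<beta> mean, OF assms(9)]
    unfolding same_event .
qed

end
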